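(* Let $\phi:\mathbb{R}\to\mathbb{R}$ be a convex function and suppose there is a set $I\subseteq[0,1]$ and a strictly increasing function $h:I\to\mathbb{R}$ such that for every $\eta\in[0,1]$ the set $\arg\min_{\alpha\in\mathbb{R}}\{\eta\,\phi(\alpha)+(1-\eta)\phi(-\alpha)\}$ equals $\{h(\eta)\}$ if $\eta\in I$ and is empty if $\eta\notin I$. Then the one-vs-all loss $L^{\mathrm{OVA}}_\phi$ is top-$k$ calibrated for every $1\le k\le m$.
   Context: Classes $\mathcal{Y}=\{1,\dots,m\}$, $m\ge 2$. Top-$k$ error: for $y\in\mathcal{Y}$, $g\in\mathbb{R}^m$, $\mathrm{err}_k(y,g)=1$ if $|\{j\ne y: g_j\ge g_y\}|\ge k$ and $0$ otherwise. A loss $L:\mathcal{Y}\times\mathbb{R}^m\to\mathbb{R}$ is called top-$k$ calibrated if for every probability vector $p\in\mathbb{R}^m$ (playing the role of $(\Pr(Y=y\mid X=x))_y$) whose coordinates are pairwise distinct, $\arg\min_{g\in\mathbb{R}^m}\sum_y p_y L(y,g)\subseteq\arg\min_{g\in\mathbb{R}^m}\sum_y p_y\,\mathrm{err}_k(y,g)$ (the left set may be empty). For a binary margin loss $\phi:\mathbb{R}\to\mathbb{R}$, the one-vs-all (OVA) reduction corresponds to the multiclass loss $L^{\mathrm{OVA}}_\phi(y,g)=\phi(g_y)+\sum_{j\ne y}\phi(-g_j)$ (class $j$ is trained as positive versus all others as negative). *)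

theory Defs
  imports "HOL-Analysis.Analysis"
begin

definition argmin_set :: "('b \<Rightarrow> real) \<Rightarrow> 'b set" where
  "argmin_set f = {x. \<forall>x'. f x \<le> f x'}"

definition err_top :: "nat \<Rightarrow> 'c::finite \<Rightarrow> ('c \<Rightarrow> real) \<Rightarrow> real" where
  "err_top k y g = (if card {j. j \<noteq> y \<and> g j \<ge> g y} \<ge> k then 1 else 0)"

definition ova_loss :: "(real \<Rightarrow> real) \<Rightarrow> 'c::finite \<Rightarrow> ('c \<Rightarrow> real) \<Rightarrow> real" where
  "ova_loss \<phi> y g = \<phi> (g y) + (\<Sum>j\<in>UNIV - {y}. \<phi> (- g j))"

definition prob_vector :: "('c::finite \<Rightarrow> real) \<Rightarrow> bool" where
  "prob_vector p \<longleftrightarrow> (\<forall>y. p y \<ge> 0) \<and> (\<Sum>y\<in>UNIV. p y) = 1"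

definition top_k_calibrated :: "nat \<Rightarrow> ('c::finite \<Rightarrow> ('c \<Rightarrow> real) \<Rightarrow> real) \<Rightarrow> bool" where
  "top_k_calibrated k L \<longleftrightarrow>
     (\<forall>p. prob_vector p \<and> inj p \<longrightarrow>
        argmin_set (\<lambda>g. \<Sum>y\<in>UNIV. p y * L y g)
          \<subseteq> argmin_set (\<lambda>g. \<Sum>y\<in>UNIV. p y * err_top k y g))"

end

theory Submission
  imports Defs
begin

text \<open>The conditional OVA risk is a sum of binary conditional risks, one per class, so a minimiser
  \<open>g\<close> must minimise each of them: \<open>g j = h (p j)\<close>. Hence \<open>g\<close> orders the classes exactly as \<open>p\<close>
  does. The top-\<open>k\<close> risk of a score vector is \<open>1\<close> minus the mass of its (at most \<open>k\<close>) top-\<open>k\<close>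
  classes, and for distinct probabilities this mass is maximal when the top-\<open>k\<close> classes are
  those of largest probability.\<close>

lemma ova_risk_eq_sum_binary_risks:
  fixes p :: "'c::finite \<Rightarrow> real"
  assumes "prob_vector p"
  shows "(\<Sum>y\<in>UNIV. p y * ova_loss \<phi> y g)
       = (\<Sum>j\<in>UNIV. p j * \<phi> (g j) + (1 - p j) * \<phi> (- g j))"
proof -
  have total: "(\<Sum>y\<in>UNIV. p y) = 1"
    using assms by (simp add: prob_vector_def)
  have "(\<Sum>y\<in>UNIV. p y * (\<Sum>j\<in>UNIV - {y}. \<phi> (- g j)))
      = (\<Sum>y\<in>UNIV. \<Sum>j\<in>UNIV. if j \<noteq> y then p y * \<phi> (- g j) else 0)"
    by (simp add: sum_distrib_left sum.If_cases Diff_eq Compl_eq)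
  also have "\<dots> = (\<Sum>j\<in>UNIV. \<Sum>y\<in>UNIV. if j \<noteq> y then p y * \<phi> (- g j) else 0)"
    by (rule sum.swap)
  also have "\<dots> = (\<Sum>j\<in>UNIV. \<phi> (- g j) * (\<Sum>y\<in>UNIV - {j}. p y))"
    by (simp add: sum_distrib_left sum.If_cases Diff_eq Compl_eq mult.commute eq_commute)
  also have "\<dots> = (\<Sum>j\<in>UNIV. (1 - p j) * \<phi> (- g j))"
    by (simp add: sum_diff1 total mult.commute)
  finally show ?thesis
    unfolding ova_loss_def by (simp add: distrib_left sum.distrib)
qed

lemma argmin_set_separable_sum:
  fixes f :: "'c::finite \<Rightarrow> 'b \<Rightarrow> real"
  assumes "g \<in> argmin_set (\<lambda>g. \<Sum>i\<in>UNIV. f i (g i))"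
  shows "g j \<in> argmin_set (f j)"
  unfolding argmin_set_def
proof (intro CollectI allI)
  fix a
  have split: "(\<Sum>i\<in>UNIV. f i (g' i)) = f j (g' j) + (\<Sum>i\<in>UNIV - {j}. f i (g' i))" for g'
    by (simp add: sum.remove)
  have "(\<Sum>i\<in>UNIV - {j}. f i ((g(j := a)) i)) = (\<Sum>i\<in>UNIV - {j}. f i (g i))"
    by (rule sum.cong) auto
  moreover have "(\<Sum>i\<in>UNIV. f i (g i)) \<le> (\<Sum>i\<in>UNIV. f i ((g(j := a)) i))"
    using assms unfolding argmin_set_def by blast
  ultimately show "f j (g j) \<le> f j a"
    using split[of g] split[of "g(j := a)"] by simp
qed

definition score_rank :: "('c::finite \<Rightarrow> real) \<Rightarrow> 'c \<Rightarrow> nat" where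
  "score_rank g y = card {j. j \<noteq> y \<and> g y \<le> g j}"

definition top_k_set :: "nat \<Rightarrow> ('c::finite \<Rightarrow> real) \<Rightarrow> 'c set" where
  "top_k_set k g = {y. score_rank g y < k}"

lemma top_k_risk_eq:
  fixes p :: "'c::finite \<Rightarrow> real"
  assumes "prob_vector p"
  shows "(\<Sum>y\<in>UNIV. p y * err_top k y g) = 1 - (\<Sum>y\<in>top_k_set k g. p y)"
proof -
  have "(\<Sum>y\<in>UNIV. p y * err_top k y g) = (\<Sum>y\<in>UNIV. if y \<in> top_k_set k g then 0 else p y)"
    by (rule sum.cong) (auto simp: err_top_def top_k_set_def score_rank_def)
  also have "\<dots> = (\<Sum>y\<in>UNIV - top_k_set k g. p y)"
    by (simp add: sum.If_cases Diff_eq Compl_eq)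
  also have "\<dots> = 1 - (\<Sum>y\<in>top_k_set k g. p y)"
    using assms by (simp add: sum_diff prob_vector_def)
  finally show ?thesis .
qed

lemma card_top_k_set_le: "card (top_k_set k g) \<le> k"
proof (rule ccontr)
  define S where "S = top_k_set k g"
  assume "\<not> card (top_k_set k g) \<le> k"
  then have big: "k < card S"
    by (simp add: S_def)
  then have "S \<noteq> {}"
    by auto
  then have "Min (g ` S) \<in> g ` S"
    by (intro Min_in) auto
  then obtain y where y: "y \<in> S" "g y = Min (g ` S)"
    by auto
  \<comment> \<open>the lowest-scoring top-\<open>k\<close> class is beaten by all the others\<close>
  have "S - {y} \<subseteq> {j. j \<noteq> y \<and> g y \<le> g j}"
    using y by auto
  then have "card S - 1 \<le> score_rank g y"
    unfolding score_rank_def using y by (metis card_Diff_singleton card_mono finite)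
  moreover have "score_rank g y < k"
    using y by (simp add: S_def top_k_set_def)
  ultimately show False
    using big by linarith
qed

lemma score_rank_strict_antimono:
  assumes "g a < g b"
  shows "score_rank g b < score_rank g a"
proof -
  have "insert b {j. j \<noteq> b \<and> g b \<le> g j} \<subseteq> {j. j \<noteq> a \<and> g a \<le> g j}"
    using assms by auto
  then have "card (insert b {j. j \<noteq> b \<and> g b \<le> g j}) \<le> score_rank g a"
    unfolding score_rank_def by (intro card_mono) auto
  then show ?thesis
    by (simp add: score_rank_def)
qed

lemma card_top_k_set_inj:
  fixes p :: "'c::finite \<Rightarrow> real"
  assumes "inj p" and "k \<le> CARD('c)"
  shows "card (top_k_set k p) = k"
proof -
  have rank_inj: "inj (score_rank p)"
  proof (rule injI, rule ccontr)
    fix y z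
    assume "score_rank p y = score_rank p z" and "y \<noteq> z"
    moreover have "p y \<noteq> p z"
      using \<open>inj p\<close> \<open>y \<noteq> z\<close> by (meson injD)
    ultimately show False
      using score_rank_strict_antimono[of p y z] score_rank_strict_antimono[of p z y]
      by (cases "p y < p z") auto
  qed
  have "score_rank p y < CARD('c)" for y
  proof -
    have "score_rank p y \<le> card (UNIV - {y} :: 'c set)"
      unfolding score_rank_def by (intro card_mono) auto
    moreover have "card (UNIV - {y} :: 'c set) < CARD('c)"
      by (rule psubset_card_mono) auto
    ultimately show ?thesis
      by linarith
  qed
  then have "range (score_rank p) \<subseteq> {..<CARD('c)}"
    by auto
  moreover have "card (range (score_rank p)) = CARD('c)"
    using rank_inj by (simp add: card_image)
  ultimately have rank_range: "range (score_rank p) = {..<CARD('c)}"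
    by (intro card_subset_eq) auto
  have "score_rank p ` top_k_set k p = {..<k}"
  proof
    show "score_rank p ` top_k_set k p \<subseteq> {..<k}"
      by (auto simp: top_k_set_def)
    show "{..<k} \<subseteq> score_rank p ` top_k_set k p"
    proof
      fix r
      assume "r \<in> {..<k}"
      moreover from this obtain y where "r = score_rank p y"
        using rank_range assms(2) by (metis lessThan_iff order_less_le_trans rangeE)
      ultimately show "r \<in> score_rank p ` top_k_set k p"
        by (auto simp: top_k_set_def)
    qed
  qed
  then show ?thesis
    using card_image[OF inj_on_subset[OF rank_inj subset_UNIV]] by (metis card_lessThan)
qed

lemma sum_le_sum_dominating:
  fixes f :: "'a \<Rightarrow> real"
  assumes "finite A" and "finite B" and "card A \<le> card B"
    and "\<And>b. b \<in> B \<Longrightarrow> f b \<ge> 0"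
    and "\<And>a b. a \<in> A \<Longrightarrow> b \<in> B \<Longrightarrow> f a \<le> f b"
  shows "sum f A \<le> sum f B"
proof (cases "A = {}")
  case True
  then show ?thesis
    using assms(4) by (simp add: sum_nonneg)
next
  case False
  define c where "c = Max (f ` A)"
  have "c \<in> f ` A"
    unfolding c_def using assms(1) False by (intro Max_in) auto
  then obtain a where a: "a \<in> A" "f a = c"
    by auto
  have "sum f A \<le> of_nat (card A) * c"
    using sum_bounded_above[of A f c] assms(1) by (simp add: c_def)
  also have "\<dots> \<le> sum f B"
  proof (cases "c \<ge> 0")
    case True
    then have "of_nat (card A) * c \<le> of_nat (card B) * c"
      using assms(3) by (intro mult_right_mono) auto
    also have "\<dots> \<le> sum f B"
      using sum_bounded_below[of B c f] assms(5) a by auto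
    finally show ?thesis .
  next
    case False
    then have "of_nat (card A) * c \<le> 0"
      by (simp add: mult_nonneg_nonpos)
    also have "\<dots> \<le> sum f B"
      using assms(4) by (simp add: sum_nonneg)
    finally show ?thesis .
  qed
  finally show ?thesis .
qed

lemma sum_top_k_set_maximal:
  fixes p :: "'c::finite \<Rightarrow> real"
  assumes "inj p" and "k \<le> CARD('c)" and "\<And>y. p y \<ge> 0" and "card S \<le> k"
  shows "(\<Sum>y\<in>S. p y) \<le> (\<Sum>y\<in>top_k_set k p. p y)"
proof -
  define C where "C = top_k_set k p"
  have dominates: "p d \<le> p c" if "c \<in> C" "d \<notin> C" for c d
    using that score_rank_strict_antimono[of p c d] by (force simp: C_def top_k_set_def)
  have "card (S \<inter> C) + card (S - C) \<le> card (S \<inter> C) + card (C - S)"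
    using assms(4) card_top_k_set_inj[OF assms(1,2)]
    by (metis C_def Int_commute card_Int_Diff finite)
  then have "(\<Sum>y\<in>S - C. p y) \<le> (\<Sum>y\<in>C - S. p y)"
    using assms(3) dominates by (intro sum_le_sum_dominating) auto
  then show ?thesis
    by (metis C_def Int_commute add_left_mono finite sum.Int_Diff)
qed

lemma top_k_set_comp_strict_mono:
  assumes "strict_mono_on A h" and "range p \<subseteq> A"
  shows "top_k_set k (\<lambda>j. h (p j)) = top_k_set k p"
proof -
  have "h (p y) \<le> h (p j) \<longleftrightarrow> p y \<le> p j" for y j
    using assms by (intro strict_mono_on_less_eq) auto
  then show ?thesis
    by (simp add: top_k_set_def score_rank_def)
qed

lemma top_k_risk_argmin:
  fixes p :: "'c::finite \<Rightarrow> real"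
  assumes "prob_vector p" and "inj p" and "k \<le> CARD('c)"
    and "top_k_set k g = top_k_set k p"
  shows "g \<in> argmin_set (\<lambda>g. \<Sum>y\<in>UNIV. p y * err_top k y g)"
proof -
  have "(\<Sum>y\<in>top_k_set k g'. p y) \<le> (\<Sum>y\<in>top_k_set k g. p y)" for g'
    using assms card_top_k_set_le[of k g']
    by (auto simp: prob_vector_def intro: sum_top_k_set_maximal)
  then show ?thesis
    unfolding argmin_set_def by (simp add: top_k_risk_eq[OF assms(1)])
qed

theorem lemma2:
  fixes \<phi> :: "real \<Rightarrow> real" and I :: "real set" and h :: "real \<Rightarrow> real"
  assumes "CARD('c::finite) \<ge> 2"
    and "convex_on UNIV \<phi>"
    and "I \<subseteq> {0..1}"
    and "strict_mono_on I h"
    and "\<forall>\<eta>\<in>{0..1}. argmin_set (\<lambda>\<alpha>. \<eta> * \<phi> \<alpha> + (1 - \<eta>) * \<phi> (- \<alpha>))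
                        = (if \<eta> \<in> I then {h \<eta>} else {})"
    and "1 \<le> k" and "k \<le> CARD('c)"
  shows "top_k_calibrated k (ova_loss \<phi> :: 'c \<Rightarrow> ('c \<Rightarrow> real) \<Rightarrow> real)"
  unfolding top_k_calibrated_def
proof (intro allI impI subsetI)
  fix p :: "'c \<Rightarrow> real" and g
  assume p: "prob_vector p \<and> inj p"
    and "g \<in> argmin_set (\<lambda>g. \<Sum>y\<in>UNIV. p y * ova_loss \<phi> y g)"
  then have "g \<in> argmin_set (\<lambda>g. \<Sum>j\<in>UNIV. p j * \<phi> (g j) + (1 - p j) * \<phi> (- g j))"
    by (simp add: ova_risk_eq_sum_binary_risks)
  then have binary_min: "g j \<in> argmin_set (\<lambda>\<alpha>. p j * \<phi> \<alpha> + (1 - p j) * \<phi> (- \<alpha>))" for j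
    by (rule argmin_set_separable_sum[where f = "\<lambda>j \<alpha>. p j * \<phi> \<alpha> + (1 - p j) * \<phi> (- \<alpha>)"])
  have "p j \<in> {0..1}" for j
    using p member_le_sum[of j UNIV p] by (auto simp: prob_vector_def)
  then have "p j \<in> I \<and> g j = h (p j)" for j
    using assms(5) binary_min[of j] by (auto split: if_splits)
  then have "g = (\<lambda>j. h (p j))" and "range p \<subseteq> I"
    by auto
  then have "top_k_set k g = top_k_set k p"
    using top_k_set_comp_strict_mono[OF assms(4)] by simp
  then show "g \<in> argmin_set (\<lambda>g. \<Sum>y\<in>UNIV. p y * err_top k y g)"
    using p assms(7) by (intro top_k_risk_argmin) auto
qed

end
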